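(* Let $(J,W)$ be a graphon with a graphon automorphism $\varphi$, and let $u(t)$ be a trajectory of the Kuramoto graphon system $\dot u_x=\int_J W(x,y)\sin(u_y-u_x)\,d\mu(y)$ on $L^1(J)$ with $\varphi^*(u(0))=u(0)$, where $\varphi^*v=v\circ\varphi$. Let $(W^{(n)})_n$ be graphons on $J$ and $u^{(n)}(t)$ trajectories of $\dot u_x=\int_J W^{(n)}(x,y)\sin(u_y-u_x)\,d\mu(y)$ such that \[ \lim_{n\to\infty}\|W^{(n)}-W\|_{\infty\to1}=0,\qquad\lim_{n\to\infty}\|u^{(n)}(0)-u(0)\|_1=0. \] Then for every $t\in\mathbb{R}$, $\lim_{n\to\infty}\|\varphi^*(u^{(n)}(t))-u^{(n)}(t)\|_1=0$, and the convergence is uniform in $t$ on every compact interval $[-T,T]$.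
   Context: A graphon $(J,W)$ is a probability space $J=(\Omega,\mathcal A,\mu)$ with a symmetric measurable $W:\Omega\times\Omega\to[0,1]$. A graphon automorphism is an invertible measure preserving $\varphi:J\to J$ such that for every $x$ and almost every $y$, $W(\varphi(x),\varphi(y))=W(x,y)$. $\|K\|_{\infty\to1}=\sup_{\|h\|_{L^\infty}\le1}\int_J\big|\int_J K(x,y)h(y)\,d\mu(y)\big|\,d\mu(x)$. *)

theory Defs
  imports "HOL-Probability.Probability"
begin

definition graphon :: "'a measure \<Rightarrow> ('a \<Rightarrow> 'a \<Rightarrow> real) \<Rightarrow> bool" where
  "graphon M W \<longleftrightarrow> prob_space M \<and>
     (\<lambda>(x,y). W x y) \<in> borel_measurable (M \<Otimes>\<^sub>M M) \<and>
     (\<forall>x\<in>space M. \<forall>y\<in>space M. W x y = W y x \<and> 0 \<le> W x y \<and> W x y \<le> 1)"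

definition meas_pres :: "'a measure \<Rightarrow> ('a \<Rightarrow> 'a) \<Rightarrow> bool" where
  "meas_pres M f \<longleftrightarrow> f \<in> M \<rightarrow>\<^sub>M M \<and> distr M M f = M"

definition graphon_automorphism :: "'a measure \<Rightarrow> ('a \<Rightarrow> 'a \<Rightarrow> real) \<Rightarrow> ('a \<Rightarrow> 'a) \<Rightarrow> bool" where
  "graphon_automorphism M W \<phi> \<longleftrightarrow>
     bij_betw \<phi> (space M) (space M) \<and> meas_pres M \<phi> \<and>
     meas_pres M (the_inv_into (space M) \<phi>) \<and>
     (\<forall>x\<in>space M. AE y in M. W (\<phi> x) (\<phi> y) = W x y)"

definition inf_to_one_norm :: "'a measure \<Rightarrow> ('a \<Rightarrow> 'a \<Rightarrow> real) \<Rightarrow> real" where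
  "inf_to_one_norm M K =
     (SUP h \<in> {h. h \<in> borel_measurable M \<and> (\<forall>x\<in>space M. \<bar>h x\<bar> \<le> 1)}.
        LINT x|M. \<bar>LINT y|M. K x y * h y\<bar>)"

definition L1_norm :: "'a measure \<Rightarrow> ('a \<Rightarrow> real) \<Rightarrow> real" where
  "L1_norm M f = (LINT x|M. \<bar>f x\<bar>)"

definition kuramoto_rhs :: "'a measure \<Rightarrow> ('a \<Rightarrow> 'a \<Rightarrow> real) \<Rightarrow> ('a \<Rightarrow> real) \<Rightarrow> 'a \<Rightarrow> real" where
  "kuramoto_rhs M W v x = (LINT y|M. W x y * sin (v y - v x))"

definition kuramoto_trajectory :: "'a measure \<Rightarrow> ('a \<Rightarrow> 'a \<Rightarrow> real) \<Rightarrow> (real \<Rightarrow> 'a \<Rightarrow> real) \<Rightarrow> bool" where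
  "kuramoto_trajectory M W u \<longleftrightarrow>
     (\<forall>t. integrable M (u t)) \<and>
     (\<forall>t. ((\<lambda>h. L1_norm M (\<lambda>x. (u (t + h) x - u t x) / h - kuramoto_rhs M W (u t) x))
            \<longlongrightarrow> 0) (at 0))"

end

theory Submission
  imports Defs
begin

text \<open>
  Write \<open>R\<^bsub>W\<^esub> v x = \<integral> W x y sin (v y - v x) dy\<close> for the Kuramoto vector field. Three
  \<open>L\<^sup>1\<close> estimates drive the proof: \<open>R\<^bsub>W\<^esub>\<close> is 2-Lipschitz; expanding
  \<open>sin (v y - v x) = sin (v y) cos (v x) - cos (v y) sin (v x)\<close> separates the variables, so
  \<open>\<parallel>R\<^bsub>W\<^esub> v - R\<^bsub>W'\<^esub> v\<parallel>\<^sub>1 \<le> 2 \<parallel>W - W'\<parallel>\<^bsub>\<infinity>\<rightarrow>1\<^esub>\<close> (test the operator against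
  \<open>sin \<circ> v\<close> and \<open>cos \<circ> v\<close>); and \<open>R\<^bsub>W\<^esub>\<close> commutes with \<open>\<phi>\<^sup>*\<close> when \<open>\<phi>\<close> is an automorphism of \<open>W\<close>.
  The \<open>L\<^sup>1\<close> norm of a difference of two trajectories need not be differentiable, but its
  upper Dini derivatives are controlled, which suffices for Gronwall's inequality. Applied to
  \<open>\<phi>\<^sup>* u - u\<close> with zero initial value it shows that \<open>u t\<close> stays \<open>\<phi>\<close>-invariant; applied to
  \<open>u\<^sup>n - u\<close> it gives, with \<open>\<epsilon>\<^sub>n = \<parallel>W\<^sup>n - W\<parallel>\<^bsub>\<infinity>\<rightarrow>1\<^esub>\<close>,
  \<open>\<parallel>u\<^sup>n t - u t\<parallel>\<^sub>1 \<le> (\<parallel>u\<^sup>n 0 - u 0\<parallel>\<^sub>1 + 2 \<epsilon>\<^sub>n \<bar>t\<bar>) exp (2 \<bar>t\<bar>)\<close>. As \<open>\<phi>\<close> preserves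
  the measure, \<open>\<parallel>\<phi>\<^sup>* u\<^sup>n t - u\<^sup>n t\<parallel>\<^sub>1 \<le> 2 \<parallel>u\<^sup>n t - u t\<parallel>\<^sub>1\<close>, which tends to zero
  uniformly for \<open>\<bar>t\<bar> \<le> T\<close>.
\<close>

section \<open>Gronwall's inequality for upper Dini derivatives\<close>

lemma closed_interval_induction:
  fixes s :: real
  assumes closed: "closed {t \<in> {0..s}. P t}" and "0 \<le> s" and "P 0"
    and step: "\<And>t. 0 \<le> t \<Longrightarrow> t < s \<Longrightarrow> P t \<Longrightarrow> \<exists>h>0. t + h \<le> s \<and> P (t + h)"
  shows "P s"
proof -
  let ?S = "{t \<in> {0..s}. P t}"
  have bdd: "bdd_above ?S" by (rule bdd_aboveI[of _ s]) auto
  have "Sup ?S \<in> ?S"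
    using closed_contains_Sup[OF _ bdd closed] assms(2,3) by auto
  then have sup: "0 \<le> Sup ?S" "Sup ?S \<le> s" "P (Sup ?S)" by auto
  show ?thesis
  proof (cases "Sup ?S < s")
    case True
    then obtain h where "h > 0" "Sup ?S + h \<le> s" "P (Sup ?S + h)" using step sup by blast
    then have "Sup ?S + h \<le> Sup ?S" using sup by (intro cSup_upper[OF _ bdd]) auto
    with \<open>h > 0\<close> show ?thesis by simp
  qed (use sup in auto)
qed

lemma affine_exp_increment_ge:
  fixes a b L t h :: real
  assumes "0 \<le> a" "0 \<le> b" "0 \<le> L" "0 \<le> t" "0 \<le> h"
  shows "(a + b*t) * exp (L*t) + h * (L * ((a + b*t) * exp (L*t)) + b)
           \<le> (a + b*(t+h)) * exp (L*(t+h))"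
proof -
  define G where "G = a + b*t"
  define E where "E = exp (L*t)"
  have "G \<ge> 0" "E \<ge> 1" "b*h \<ge> 0" "L*h \<ge> 0" using assms by (auto simp: G_def E_def)
  have "1 * 1 \<le> E * (1 + L*h)" using \<open>E \<ge> 1\<close> \<open>L*h \<ge> 0\<close> by (intro mult_mono) auto
  then have "b*h * 1 \<le> b*h * (E * (1 + L*h))" using \<open>b*h \<ge> 0\<close> by (intro mult_left_mono) auto
  then have "G*E + h * (L * (G*E) + b) \<le> G*E + h*L*(G*E) + b*h*(E*(1 + L*h))"
    by (simp add: algebra_simps)
  also have "\<dots> = (G + b*h) * E * (1 + L*h)" by (simp add: algebra_simps)
  also have "\<dots> \<le> (G + b*h) * E * exp (L*h)"
    using \<open>G \<ge> 0\<close> \<open>E \<ge> 1\<close> \<open>b*h \<ge> 0\<close> by (intro mult_left_mono exp_ge_add_one_self) auto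
  also have "\<dots> = (a + b*(t+h)) * exp (L*(t+h))"
    by (simp add: G_def E_def algebra_simps exp_add)
  finally show ?thesis by (simp add: G_def E_def)
qed

lemma gronwall_forward:
  fixes f :: "real \<Rightarrow> real"
  assumes cont: "continuous_on {0..s} f" and "0 \<le> s" and "0 \<le> f 0" and "0 \<le> L" and "0 \<le> c"
    and step: "\<And>t e. 0 \<le> t \<Longrightarrow> t < s \<Longrightarrow> 0 < e \<Longrightarrow>
       \<exists>d>0. \<forall>h. 0 < h \<and> h < d \<longrightarrow> f (t+h) \<le> f t + h * (L * f t + c + e)"
  shows "f s \<le> (f 0 + c * s) * exp (L * s)"
proof -
  \<comment> \<open>\<open>f\<close> cannot cross the strict supersolution \<open>F\<close>; then let \<open>\<delta> \<rightarrow> 0\<close>.\<close>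
  have approx: "f s \<le> (f 0 + \<delta> + (c + \<delta>) * s) * exp (L * s)" if "\<delta> > 0" for \<delta>
  proof -
    define F where "F t = (f 0 + \<delta> + (c + \<delta>)*t) * exp (L*t)" for t
    have "f s \<le> F s"
    proof (rule closed_interval_induction[where P = "\<lambda>t. f t \<le> F t"])
      show "closed {t \<in> {0..s}. f t \<le> F t}"
        unfolding F_def by (intro continuous_on_closed_Collect_le cont continuous_intros)
      show "f 0 \<le> F 0" using \<open>\<delta> > 0\<close> by (simp add: F_def)
      fix t assume t: "0 \<le> t" "t < s" and le: "f t \<le> F t"
      obtain d where "d > 0" and d: "\<And>h. 0 < h \<Longrightarrow> h < d \<Longrightarrow> f (t+h) \<le> f t + h * (L * f t + c + \<delta>/2)"
        using step[OF t, of "\<delta>/2"] \<open>\<delta> > 0\<close> by auto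
      define h where "h = min d (s - t) / 2"
      have h: "0 < h" "h < d" "t + h \<le> s" using \<open>d > 0\<close> t by (auto simp: h_def min_def field_simps)
      have "f (t+h) \<le> f t + h * (L * f t + c + \<delta>/2)" using d h by simp
      also have "\<dots> \<le> F t + h * (L * F t + (c + \<delta>))"
      proof -
        have "h * (L * f t) \<le> h * (L * F t)" using le h \<open>0 \<le> L\<close> by (intro mult_left_mono) auto
        moreover have "0 < h * \<delta>" using h \<open>\<delta> > 0\<close> by simp
        ultimately show ?thesis using le by (simp add: algebra_simps)
      qed
      also have "\<dots> \<le> F (t+h)"
        unfolding F_def using assms(3-5) \<open>\<delta> > 0\<close> t h
        by (intro affine_exp_increment_ge) auto
      finally show "\<exists>h>0. t + h \<le> s \<and> f (t+h) \<le> F (t+h)" using h by blast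
    qed (use assms(2) in auto)
    then show ?thesis by (simp add: F_def)
  qed
  have "((\<lambda>\<delta>. (f 0 + \<delta> + (c + \<delta>) * s) * exp (L * s)) \<longlongrightarrow> (f 0 + 0 + (c + 0) * s) * exp (L * s)) (at_right 0)"
    by (intro tendsto_intros)
  then have "((\<lambda>\<delta>. (f 0 + \<delta> + (c + \<delta>) * s) * exp (L * s)) \<longlongrightarrow> (f 0 + c * s) * exp (L * s)) (at_right 0)"
    by simp
  then show ?thesis
    by (rule tendsto_lowerbound) (auto intro: eventually_mono[OF eventually_at_right_less] approx)
qed

lemma gronwall_upper_dini:
  fixes f :: "real \<Rightarrow> real"
  assumes cont: "continuous_on UNIV f" and "0 \<le> f 0" and L: "0 \<le> L" and c: "0 \<le> c"
    and step: "\<And>t e. 0 < e \<Longrightarrow>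
       \<exists>d>0. \<forall>h. h \<noteq> 0 \<and> \<bar>h\<bar> < d \<longrightarrow> f (t+h) \<le> f t + \<bar>h\<bar> * (L * f t + c + e)"
  shows "f s \<le> (f 0 + c * \<bar>s\<bar>) * exp (L * \<bar>s\<bar>)"
proof (cases "0 \<le> s")
  case True
  have "f s \<le> (f 0 + c * s) * exp (L * s)"
  proof (rule gronwall_forward[OF continuous_on_subset[OF cont] True assms(2) L c])
    fix t e :: real assume "0 < e"
    then obtain d where "d > 0" "\<forall>h. h \<noteq> 0 \<and> \<bar>h\<bar> < d \<longrightarrow> f (t+h) \<le> f t + \<bar>h\<bar> * (L * f t + c + e)"
      using step by blast
    then show "\<exists>d>0. \<forall>h. 0 < h \<and> h < d \<longrightarrow> f (t+h) \<le> f t + h * (L * f t + c + e)"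
      by (metis abs_of_pos less_irrefl)
  qed auto
  with True show ?thesis by simp
next
  case False
  have "f (- (- s)) \<le> (f (- 0) + c * (-s)) * exp (L * (-s))"
  proof (rule gronwall_forward[where f = "\<lambda>t. f (- t)", OF _ _ _ L c])
    show "continuous_on {0..-s} (\<lambda>t. f (- t))"
      by (intro continuous_on_compose2[OF cont] continuous_intros) auto
    fix t e :: real assume "0 < e"
    then obtain d where "d > 0" and d: "\<forall>h. h \<noteq> 0 \<and> \<bar>h\<bar> < d \<longrightarrow> f (-t+h) \<le> f (-t) + \<bar>h\<bar> * (L * f (-t) + c + e)"
      using step by blast
    have "f (- (t+h)) \<le> f (-t) + h * (L * f (-t) + c + e)" if "0 < h" "h < d" for h
      using d[rule_format, of "-h"] that by simp
    with \<open>d > 0\<close> show "\<exists>d>0. \<forall>h. 0 < h \<and> h < d \<longrightarrow> f (- (t+h)) \<le> f (-t) + h * (L * f (-t) + c + e)"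
      by blast
  qed (use False assms(2) in auto)
  with False show ?thesis by simp
qed

section \<open>Differentiability in \<open>L\<^sup>1\<close>\<close>

lemma L1_norm_nonneg: "0 \<le> L1_norm M f"
  unfolding L1_norm_def by simp

lemma L1_norm_cong: "(\<And>x. x \<in> space M \<Longrightarrow> f x = g x) \<Longrightarrow> L1_norm M f = L1_norm M g"
  unfolding L1_norm_def by (rule Bochner_Integration.integral_cong) auto

lemma L1_norm_commute: "L1_norm M (\<lambda>x. f x - g x) = L1_norm M (\<lambda>x. g x - f x)"
  unfolding L1_norm_def by (simp add: abs_minus_commute)

lemma L1_norm_le_add:
  assumes "integrable M g" "integrable M h"
    and "\<And>x. x \<in> space M \<Longrightarrow> \<bar>f x\<bar> \<le> \<bar>g x\<bar> + \<bar>h x\<bar>"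
  shows "L1_norm M f \<le> L1_norm M g + L1_norm M h"
proof -
  have "L1_norm M f \<le> (LINT x|M. \<bar>g x\<bar> + \<bar>h x\<bar>)"
    unfolding L1_norm_def using assms by (intro integral_mono') auto
  also have "\<dots> = L1_norm M g + L1_norm M h"
    unfolding L1_norm_def using assms(1,2) by (intro Bochner_Integration.integral_add) auto
  finally show ?thesis .
qed

lemma L1_norm_triangle:
  fixes f g k :: "'a \<Rightarrow> real"
  assumes "integrable M f" "integrable M g" "integrable M k"
  shows "L1_norm M (\<lambda>x. f x - g x) \<le> L1_norm M (\<lambda>x. f x - k x) + L1_norm M (\<lambda>x. k x - g x)"
  using assms by (intro L1_norm_le_add) auto

lemma L1_norm_compose_meas_pres:
  assumes "meas_pres M \<phi>" "g \<in> borel_measurable M"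
  shows "L1_norm M (\<lambda>x. g (\<phi> x)) = L1_norm M g"
proof -
  have \<phi>: "\<phi> \<in> M \<rightarrow>\<^sub>M M" and distr: "distr M M \<phi> = M"
    using assms(1) unfolding meas_pres_def by auto
  have "integral\<^sup>L (distr M M \<phi>) (\<lambda>x. \<bar>g x\<bar>) = (LINT x|M. \<bar>g (\<phi> x)\<bar>)"
    using assms(2) by (intro integral_distr[OF \<phi>]) auto
  then show ?thesis unfolding L1_norm_def distr by simp
qed

lemma integrable_compose_meas_pres:
  fixes g :: "'a \<Rightarrow> real"
  assumes "meas_pres M \<phi>" "integrable M g"
  shows "integrable M (\<lambda>x. g (\<phi> x))"
  using assms integrable_distr_eq[of \<phi> M M g] unfolding meas_pres_def by auto

lemma L1_norm_compose_diff_le: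
  fixes v w :: "'a \<Rightarrow> real"
  assumes \<phi>: "meas_pres M \<phi>" and v: "integrable M v" and w: "integrable M w"
  shows "L1_norm M (\<lambda>x. v (\<phi> x) - v x)
           \<le> 2 * L1_norm M (\<lambda>x. v x - w x) + L1_norm M (\<lambda>x. w (\<phi> x) - w x)"
proof -
  have v\<phi>: "integrable M (\<lambda>x. v (\<phi> x))" and w\<phi>: "integrable M (\<lambda>x. w (\<phi> x))"
    using integrable_compose_meas_pres[OF \<phi>] v w by auto
  have "L1_norm M (\<lambda>x. v (\<phi> x) - v x)
        \<le> L1_norm M (\<lambda>x. v (\<phi> x) - w (\<phi> x)) + L1_norm M (\<lambda>x. w (\<phi> x) - v x)"
    by (rule L1_norm_triangle[OF v\<phi> v w\<phi>])
  also have "L1_norm M (\<lambda>x. v (\<phi> x) - w (\<phi> x)) = L1_norm M (\<lambda>x. v x - w x)"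
    using v w by (intro L1_norm_compose_meas_pres[OF \<phi>, of "\<lambda>x. v x - w x"]) auto
  also have "L1_norm M (\<lambda>x. w (\<phi> x) - v x)
             \<le> L1_norm M (\<lambda>x. w (\<phi> x) - w x) + L1_norm M (\<lambda>x. w x - v x)"
    by (rule L1_norm_triangle[OF w\<phi> v w])
  finally show ?thesis using L1_norm_commute[of M w v] by simp
qed

definition has_L1_derivative :: "'a measure \<Rightarrow> (real \<Rightarrow> 'a \<Rightarrow> real) \<Rightarrow> (real \<Rightarrow> 'a \<Rightarrow> real) \<Rightarrow> bool" where
  "has_L1_derivative M p D \<longleftrightarrow>
     (\<forall>t. ((\<lambda>h. L1_norm M (\<lambda>x. (p (t + h) x - p t x) / h - D t x)) \<longlongrightarrow> 0) (at 0))"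

lemma integrable_difference_quotient:
  fixes f g k :: "'a \<Rightarrow> real"
  shows "integrable M f \<Longrightarrow> integrable M g \<Longrightarrow> integrable M k \<Longrightarrow>
    integrable M (\<lambda>x. (f x - g x) / h - k x)"
  by (intro Bochner_Integration.integrable_diff integrable_divide)

lemma has_L1_derivative_diff:
  assumes ia: "\<And>t. integrable M (a t)" and ib: "\<And>t. integrable M (b t)"
    and ida: "\<And>t. integrable M (da t)" and idb: "\<And>t. integrable M (db t)"
    and a: "has_L1_derivative M a da" and b: "has_L1_derivative M b db"
  shows "has_L1_derivative M (\<lambda>t x. a t x - b t x) (\<lambda>t x. da t x - db t x)"
  unfolding has_L1_derivative_def
proof
  fix t
  let ?qa = "\<lambda>h x. (a (t + h) x - a t x) / h - da t x"
  let ?qb = "\<lambda>h x. (b (t + h) x - b t x) / h - db t x"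
  let ?q = "\<lambda>h x. ((a (t + h) x - b (t + h) x) - (a t x - b t x)) / h - (da t x - db t x)"
  have lim: "((\<lambda>h. L1_norm M (?qa h) + L1_norm M (?qb h)) \<longlongrightarrow> 0) (at 0)"
    using a b unfolding has_L1_derivative_def by (intro tendsto_add_zero) auto
  have le: "norm (L1_norm M (?q h)) \<le> L1_norm M (?qa h) + L1_norm M (?qb h)" for h
  proof -
    have "?q h x = ?qa h x - ?qb h x" for x by (simp add: diff_divide_distrib)
    then have "L1_norm M (?q h) \<le> L1_norm M (?qa h) + L1_norm M (?qb h)"
      using ia ib ida idb by (intro L1_norm_le_add integrable_difference_quotient) auto
    then show ?thesis using L1_norm_nonneg[of M "?q h"] by simp
  qed
  show "((\<lambda>h. L1_norm M (?q h)) \<longlongrightarrow> 0) (at 0)"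
    by (rule Lim_null_comparison[OF always_eventually[OF allI[OF le]] lim])
qed

lemma has_L1_derivative_compose_meas_pres:
  assumes \<phi>: "meas_pres M \<phi>" and ia: "\<And>t. integrable M (a t)" and ida: "\<And>t. integrable M (da t)"
    and a: "has_L1_derivative M a da"
  shows "has_L1_derivative M (\<lambda>t x. a t (\<phi> x)) (\<lambda>t x. da t (\<phi> x))"
proof -
  have "L1_norm M (\<lambda>x. (a (t + h) (\<phi> x) - a t (\<phi> x)) / h - da t (\<phi> x))
      = L1_norm M (\<lambda>x. (a (t + h) x - a t x) / h - da t x)" for t h
    using ia ida by (intro L1_norm_compose_meas_pres[OF \<phi>] borel_measurable_integrable
        integrable_difference_quotient)
  with a show ?thesis unfolding has_L1_derivative_def by simp
qed

lemma L1_norm_increment_le: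
  fixes p D :: "real \<Rightarrow> 'a \<Rightarrow> real"
  assumes ip: "\<And>t. integrable M (p t)" and iD: "\<And>t. integrable M (D t)" and "h \<noteq> 0"
  shows "\<bar>L1_norm M (p (t + h)) - L1_norm M (p t)\<bar>
           \<le> \<bar>h\<bar> * (L1_norm M (D t) + L1_norm M (\<lambda>x. (p (t + h) x - p t x) / h - D t x))"
proof -
  have "L1_norm M (\<lambda>x. p (t + h) x - p t x) = L1_norm M (\<lambda>x. h * ((p (t + h) x - p t x) / h))"
    using \<open>h \<noteq> 0\<close> by (intro L1_norm_cong) auto
  also have "\<dots> = \<bar>h\<bar> * L1_norm M (\<lambda>x. (p (t + h) x - p t x) / h)"
    unfolding L1_norm_def by (simp add: abs_mult)
  also have "L1_norm M (\<lambda>x. (p (t + h) x - p t x) / h)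
      \<le> L1_norm M (D t) + L1_norm M (\<lambda>x. (p (t + h) x - p t x) / h - D t x)"
    using ip iD by (intro L1_norm_le_add integrable_difference_quotient) auto
  finally have incr: "L1_norm M (\<lambda>x. p (t + h) x - p t x)
      \<le> \<bar>h\<bar> * (L1_norm M (D t) + L1_norm M (\<lambda>x. (p (t + h) x - p t x) / h - D t x))"
    by (simp add: mult_left_mono)
  have "L1_norm M (p (t + h)) \<le> L1_norm M (p t) + L1_norm M (\<lambda>x. p (t + h) x - p t x)"
    by (intro L1_norm_le_add Bochner_Integration.integrable_diff ip) auto
  moreover have "L1_norm M (p t) \<le> L1_norm M (p (t + h)) + L1_norm M (\<lambda>x. p (t + h) x - p t x)"
    by (intro L1_norm_le_add Bochner_Integration.integrable_diff ip) auto
  ultimately show ?thesis using incr by linarith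
qed

lemma has_L1_derivative_continuous_L1_norm:
  fixes p D :: "real \<Rightarrow> 'a \<Rightarrow> real"
  assumes ip: "\<And>t. integrable M (p t)" and iD: "\<And>t. integrable M (D t)"
    and d: "has_L1_derivative M p D"
  shows "continuous_on UNIV (\<lambda>t. L1_norm M (p t))"
proof (intro continuous_at_imp_continuous_on ballI)
  fix t :: real
  let ?e = "\<lambda>h. L1_norm M (\<lambda>x. (p (t + h) x - p t x) / h - D t x)"
  have "((\<lambda>h. ?e h) \<longlongrightarrow> 0) (at 0)" using d unfolding has_L1_derivative_def by blast
  then have "((\<lambda>h. \<bar>h\<bar> * (L1_norm M (D t) + ?e h)) \<longlongrightarrow> \<bar>0\<bar> * (L1_norm M (D t) + 0)) (at 0)"
    by (intro tendsto_intros)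
  then have lim: "((\<lambda>h. \<bar>h\<bar> * (L1_norm M (D t) + ?e h)) \<longlongrightarrow> 0) (at 0)"
    by simp
  have le: "\<forall>\<^sub>F h in at 0. norm (L1_norm M (p (t + h)) - L1_norm M (p t))
                    \<le> \<bar>h\<bar> * (L1_norm M (D t) + ?e h)"
    using L1_norm_increment_le[where p = p and D = D and t = t, OF ip iD] by (auto simp: eventually_at_filter)
  have "((\<lambda>h. L1_norm M (p (t + h)) - L1_norm M (p t)) \<longlongrightarrow> 0) (at 0)"
    by (rule Lim_null_comparison[OF le lim])
  then show "isCont (\<lambda>t. L1_norm M (p t)) t"
    unfolding isCont_iff by (simp add: LIM_zero_iff)
qed

lemma has_L1_derivative_upper_dini:
  fixes p D :: "real \<Rightarrow> 'a \<Rightarrow> real"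
  assumes ip: "\<And>t. integrable M (p t)" and iD: "\<And>t. integrable M (D t)"
    and d: "has_L1_derivative M p D" and "0 < e"
  shows "\<exists>\<delta>>0. \<forall>h. h \<noteq> 0 \<and> \<bar>h\<bar> < \<delta> \<longrightarrow>
           L1_norm M (p (t + h)) \<le> L1_norm M (p t) + \<bar>h\<bar> * (L1_norm M (D t) + e)"
proof -
  let ?e = "\<lambda>h. L1_norm M (\<lambda>x. (p (t + h) x - p t x) / h - D t x)"
  have "\<forall>\<^sub>F h in at 0. ?e h < e"
    using d \<open>0 < e\<close> unfolding has_L1_derivative_def by (auto dest: order_tendstoD(2))
  then obtain \<delta> where "\<delta> > 0" and \<delta>: "\<And>h. h \<noteq> 0 \<Longrightarrow> \<bar>h\<bar> < \<delta> \<Longrightarrow> ?e h < e"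
    unfolding eventually_at by auto
  have "L1_norm M (p (t + h)) \<le> L1_norm M (p t) + \<bar>h\<bar> * (L1_norm M (D t) + e)"
    if "h \<noteq> 0" "\<bar>h\<bar> < \<delta>" for h
  proof -
    have "\<bar>h\<bar> * (L1_norm M (D t) + ?e h) \<le> \<bar>h\<bar> * (L1_norm M (D t) + e)"
      using \<delta>[OF that] by (intro mult_left_mono) auto
    then show ?thesis using L1_norm_increment_le[where p = p and D = D and t = t, OF ip iD \<open>h \<noteq> 0\<close>] by linarith
  qed
  with \<open>\<delta> > 0\<close> show ?thesis by blast
qed

lemma has_L1_derivative_gronwall:
  fixes p D :: "real \<Rightarrow> 'a \<Rightarrow> real"
  assumes ip: "\<And>t. integrable M (p t)" and iD: "\<And>t. integrable M (D t)"
    and d: "has_L1_derivative M p D"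
    and bound: "\<And>t. L1_norm M (D t) \<le> L * L1_norm M (p t) + c" and "0 \<le> L" "0 \<le> c"
  shows "L1_norm M (p t) \<le> (L1_norm M (p 0) + c * \<bar>t\<bar>) * exp (L * \<bar>t\<bar>)"
proof (rule gronwall_upper_dini)
  show "continuous_on UNIV (\<lambda>t. L1_norm M (p t))"
    by (rule has_L1_derivative_continuous_L1_norm[OF ip iD d])
  show "0 \<le> L1_norm M (p 0)" by (rule L1_norm_nonneg)
next
  fix s e :: real assume "0 < e"
  then obtain \<delta> where "\<delta> > 0" and \<delta>: "\<forall>h. h \<noteq> 0 \<and> \<bar>h\<bar> < \<delta> \<longrightarrow>
      L1_norm M (p (s + h)) \<le> L1_norm M (p s) + \<bar>h\<bar> * (L1_norm M (D s) + e)"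
    using has_L1_derivative_upper_dini[OF ip iD d] by blast
  show "\<exists>\<delta>>0. \<forall>h. h \<noteq> 0 \<and> \<bar>h\<bar> < \<delta> \<longrightarrow>
      L1_norm M (p (s + h)) \<le> L1_norm M (p s) + \<bar>h\<bar> * (L * L1_norm M (p s) + c + e)"
  proof (intro exI[of _ \<delta>] conjI allI impI)
    fix h assume "h \<noteq> 0 \<and> \<bar>h\<bar> < \<delta>"
    then have "L1_norm M (p (s + h)) \<le> L1_norm M (p s) + \<bar>h\<bar> * (L1_norm M (D s) + e)"
      using \<delta> by blast
    also have "\<dots> \<le> L1_norm M (p s) + \<bar>h\<bar> * (L * L1_norm M (p s) + c + e)"
      using bound[of s] by (intro add_left_mono mult_left_mono) auto
    finally show "L1_norm M (p (s + h)) \<le> L1_norm M (p s) + \<bar>h\<bar> * (L * L1_norm M (p s) + c + e)" .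
  qed fact
qed fact+

section \<open>The Kuramoto vector field\<close>

definition bounded_kernel :: "'a measure \<Rightarrow> ('a \<Rightarrow> 'a \<Rightarrow> real) \<Rightarrow> bool" where
  "bounded_kernel M K \<longleftrightarrow> (\<lambda>(x, y). K x y) \<in> borel_measurable (M \<Otimes>\<^sub>M M) \<and>
     (\<forall>x\<in>space M. \<forall>y\<in>space M. \<bar>K x y\<bar> \<le> 1)"

lemma bounded_kernel_graphon: "graphon M W \<Longrightarrow> bounded_kernel M W"
  unfolding graphon_def bounded_kernel_def by auto

lemma bounded_kernel_graphon_diff:
  assumes "graphon M W" "graphon M W'"
  shows "bounded_kernel M (\<lambda>x y. W x y - W' x y)"
proof -
  have "(\<lambda>(x, y). W x y) \<in> borel_measurable (M \<Otimes>\<^sub>M M)" "(\<lambda>(x, y). W' x y) \<in> borel_measurable (M \<Otimes>\<^sub>M M)"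
    using assms unfolding graphon_def by auto
  then have "(\<lambda>z. (\<lambda>(x, y). W x y) z - (\<lambda>(x, y). W' x y) z) \<in> borel_measurable (M \<Otimes>\<^sub>M M)"
    by (rule borel_measurable_diff)
  moreover have "\<bar>W x y - W' x y\<bar> \<le> 1" if "x \<in> space M" "y \<in> space M" for x y
  proof -
    have "0 \<le> W x y" "W x y \<le> 1" "0 \<le> W' x y" "W' x y \<le> 1"
      using assms that unfolding graphon_def by auto
    then show ?thesis by linarith
  qed
  ultimately show ?thesis unfolding bounded_kernel_def by (simp add: case_prod_beta')
qed

lemma bounded_kernel_section_measurable:
  assumes "bounded_kernel M K" "x \<in> space M"
  shows "K x \<in> borel_measurable M"
proof -
  have "(\<lambda>(x, y). K x y) \<in> borel_measurable (M \<Otimes>\<^sub>M M)"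
    using assms(1) unfolding bounded_kernel_def by simp
  from measurable_compose[OF measurable_Pair1'[OF assms(2)] this] show ?thesis by simp
qed

lemma borel_measurable_sin_diff:
  fixes v :: "'a \<Rightarrow> real"
  assumes [measurable]: "v \<in> borel_measurable M"
  shows "(\<lambda>(x, y). sin (v y - v x)) \<in> borel_measurable (M \<Otimes>\<^sub>M M)"
  by measurable

lemma borel_measurable_sin_diff_const:
  fixes v :: "'a \<Rightarrow> real"
  assumes [measurable]: "v \<in> borel_measurable M"
  shows "(\<lambda>y. sin (v y - c)) \<in> borel_measurable M"
  by measurable

lemma bounded_kernel_abs_mult_le:
  assumes "bounded_kernel M K" "x \<in> space M" "y \<in> space M" "\<bar>g y\<bar> \<le> 1"
  shows "\<bar>K x y * g y\<bar> \<le> 1"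
  using assms unfolding bounded_kernel_def by (auto simp: abs_mult intro!: mult_le_one)

lemma abs_sin_diff_sin_le: "\<bar>sin a - sin b\<bar> \<le> \<bar>a - b\<bar>" for a b :: real
proof -
  have "\<bar>sin a - sin b\<bar> = 2 * \<bar>sin ((a - b) / 2)\<bar> * \<bar>cos ((a + b) / 2)\<bar>"
    by (simp add: sin_diff_sin abs_mult)
  also have "\<dots> \<le> 2 * \<bar>(a - b) / 2\<bar> * 1"
    by (intro mult_mono abs_sin_x_le_abs_x) auto
  finally show ?thesis by simp
qed

context prob_space
begin

lemma borel_measurable_kernel_integral:
  assumes "bounded_kernel M K" "(\<lambda>(x, y). g x y) \<in> borel_measurable (M \<Otimes>\<^sub>M M)"
  shows "(\<lambda>x. LINT y|M. K x y * g x y) \<in> borel_measurable M"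
proof -
  have "(\<lambda>z. (\<lambda>(x, y). K x y) z * (\<lambda>(x, y). g x y) z) \<in> borel_measurable (M \<Otimes>\<^sub>M M)"
    using assms unfolding bounded_kernel_def by (intro borel_measurable_times) auto
  then show ?thesis
    by (intro borel_measurable_lebesgue_integral) (simp add: case_prod_beta')
qed

lemma bounded_kernel_integrable:
  assumes K: "bounded_kernel M K" and x: "x \<in> space M" and g: "g \<in> borel_measurable M"
    and g_le: "\<And>y. y \<in> space M \<Longrightarrow> \<bar>g y\<bar> \<le> 1"
  shows "integrable M (\<lambda>y. K x y * g y)"
proof (rule integrable_const_bound[where B = 1])
  show "AE y in M. norm (K x y * g y) \<le> 1"
    by (intro AE_I2) (simp add: bounded_kernel_abs_mult_le[OF K x] g_le)
  show "(\<lambda>y. K x y * g y) \<in> borel_measurable M"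
    by (intro borel_measurable_times bounded_kernel_section_measurable[OF K x] g)
qed

lemma bounded_kernel_integral_le:
  assumes K: "bounded_kernel M K" and x: "x \<in> space M" and g: "g \<in> borel_measurable M"
    and g_le: "\<And>y. y \<in> space M \<Longrightarrow> \<bar>g y\<bar> \<le> 1"
  shows "\<bar>LINT y|M. K x y * g y\<bar> \<le> 1"
proof -
  have "\<bar>LINT y|M. K x y * g y\<bar> \<le> (LINT y|M. \<bar>K x y * g y\<bar>)"
    using integral_norm_bound[of M "\<lambda>y. K x y * g y"] by simp
  also have "\<dots> \<le> (LINT y|M. 1)"
    by (rule integral_mono') (simp_all add: bounded_kernel_abs_mult_le[OF K x] g_le)
  finally show ?thesis by (simp add: prob_space)
qed

lemma inf_to_one_norm_ge:
  assumes K: "bounded_kernel M K" and g: "g \<in> borel_measurable M"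
    and g_le: "\<And>y. y \<in> space M \<Longrightarrow> \<bar>g y\<bar> \<le> 1"
  shows "(LINT x|M. \<bar>LINT y|M. K x y * g y\<bar>) \<le> inf_to_one_norm M K"
proof -
  let ?H = "{h :: 'a \<Rightarrow> real. h \<in> borel_measurable M \<and> (\<forall>x\<in>space M. \<bar>h x\<bar> \<le> 1)}"
  have bdd: "bdd_above ((\<lambda>h. LINT x|M. \<bar>LINT y|M. K x y * h y\<bar>) ` ?H)"
  proof (rule bdd_aboveI2)
    fix h assume "h \<in> ?H"
    then have h: "h \<in> borel_measurable M" "\<And>y. y \<in> space M \<Longrightarrow> \<bar>h y\<bar> \<le> 1" by auto
    have "(LINT x|M. \<bar>LINT y|M. K x y * h y\<bar>) \<le> (LINT x|M. 1)"
    proof (rule integral_mono'[where f = "\<lambda>_. 1"])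
      show "\<bar>LINT y|M. K x y * h y\<bar> \<le> 1" if "x \<in> space M" for x
        by (rule bounded_kernel_integral_le[OF K that h])
    qed simp_all
    then show "(LINT x|M. \<bar>LINT y|M. K x y * h y\<bar>) \<le> 1" by (simp add: prob_space)
  qed
  have "g \<in> ?H" using g g_le by simp
  from cSUP_upper[OF this bdd] show ?thesis unfolding inf_to_one_norm_def .
qed

lemma inf_to_one_norm_nonneg: "bounded_kernel M K \<Longrightarrow> 0 \<le> inf_to_one_norm M K"
  using inf_to_one_norm_ge[of K "\<lambda>_. 0"] by simp

lemma kuramoto_rhs_integrable_section:
  assumes "bounded_kernel M W" "v \<in> borel_measurable M" "x \<in> space M"
  shows "integrable M (\<lambda>y. W x y * sin (v y - v x))"
proof (rule bounded_kernel_integrable[OF assms(1,3)])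
  show "(\<lambda>y. sin (v y - v x)) \<in> borel_measurable M" by (rule borel_measurable_sin_diff_const[OF assms(2)])
qed simp

lemma abs_kuramoto_rhs_le:
  assumes "bounded_kernel M W" "v \<in> borel_measurable M" "x \<in> space M"
  shows "\<bar>kuramoto_rhs M W v x\<bar> \<le> 1"
  unfolding kuramoto_rhs_def
proof (rule bounded_kernel_integral_le[OF assms(1,3)])
  show "(\<lambda>y. sin (v y - v x)) \<in> borel_measurable M" by (rule borel_measurable_sin_diff_const[OF assms(2)])
qed simp

lemma borel_measurable_kuramoto_rhs:
  assumes "bounded_kernel M W" "v \<in> borel_measurable M"
  shows "kuramoto_rhs M W v \<in> borel_measurable M"
  unfolding kuramoto_rhs_def[abs_def]
  by (intro borel_measurable_kernel_integral[OF assms(1)] borel_measurable_sin_diff assms(2))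

lemma integrable_kuramoto_rhs:
  assumes "bounded_kernel M W" "v \<in> borel_measurable M"
  shows "integrable M (kuramoto_rhs M W v)"
proof (rule integrable_const_bound[where B = 1])
  show "AE x in M. norm (kuramoto_rhs M W v x) \<le> 1"
    by (intro AE_I2) (simp add: abs_kuramoto_rhs_le[OF assms])
qed (rule borel_measurable_kuramoto_rhs[OF assms])

lemma integrable_kernel_integral:
  assumes K: "bounded_kernel M K" and g: "g \<in> borel_measurable M"
    and g_le: "\<And>y. y \<in> space M \<Longrightarrow> \<bar>g y\<bar> \<le> 1"
  shows "integrable M (\<lambda>x. LINT y|M. K x y * g y)"
proof (rule integrable_const_bound[where B = 1])
  show "AE x in M. norm (LINT y|M. K x y * g y) \<le> 1"
    by (intro AE_I2) (simp add: bounded_kernel_integral_le[OF K _ g g_le])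
  have "(\<lambda>(x, y). g y) \<in> borel_measurable (M \<Otimes>\<^sub>M M)"
    using measurable_compose[OF measurable_snd g] by (simp add: case_prod_beta')
  then show "(\<lambda>x. LINT y|M. K x y * g y) \<in> borel_measurable M"
    by (rule borel_measurable_kernel_integral[OF K])
qed

lemma abs_kuramoto_rhs_diff_le:
  assumes W: "bounded_kernel M W" and v: "integrable M v" and w: "integrable M w"
    and x: "x \<in> space M"
  shows "\<bar>kuramoto_rhs M W v x - kuramoto_rhs M W w x\<bar> \<le> L1_norm M (\<lambda>y. v y - w y) + \<bar>v x - w x\<bar>"
proof -
  have "kuramoto_rhs M W v x - kuramoto_rhs M W w x
      = (LINT y|M. W x y * sin (v y - v x) - W x y * sin (w y - w x))"
    unfolding kuramoto_rhs_def using v w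
    by (intro Bochner_Integration.integral_diff[symmetric] kuramoto_rhs_integrable_section[OF W _ x])
      auto
  also have "\<bar>\<dots>\<bar> \<le> (LINT y|M. \<bar>W x y * sin (v y - v x) - W x y * sin (w y - w x)\<bar>)"
    using integral_norm_bound[of M "\<lambda>y. W x y * sin (v y - v x) - W x y * sin (w y - w x)"] by simp
  also have "\<dots> \<le> (LINT y|M. \<bar>v y - w y\<bar> + \<bar>v x - w x\<bar>)"
  proof (rule integral_mono')
    show "integrable M (\<lambda>y. \<bar>v y - w y\<bar> + \<bar>v x - w x\<bar>)" using v w by simp
    fix y assume y: "y \<in> space M"
    have "\<bar>W x y * sin (v y - v x) - W x y * sin (w y - w x)\<bar>
        = \<bar>W x y\<bar> * \<bar>sin (v y - v x) - sin (w y - w x)\<bar>"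
      by (simp add: abs_mult right_diff_distrib[symmetric])
    also have "\<dots> \<le> 1 * \<bar>(v y - v x) - (w y - w x)\<bar>"
      using W x y unfolding bounded_kernel_def by (intro mult_mono abs_sin_diff_sin_le) auto
    also have "\<dots> \<le> \<bar>v y - w y\<bar> + \<bar>v x - w x\<bar>" by simp
    finally show "\<bar>W x y * sin (v y - v x) - W x y * sin (w y - w x)\<bar> \<le> \<bar>v y - w y\<bar> + \<bar>v x - w x\<bar>" .
  qed simp
  also have "\<dots> = L1_norm M (\<lambda>y. v y - w y) + \<bar>v x - w x\<bar>"
    unfolding L1_norm_def using v w by (simp add: prob_space)
  finally show ?thesis .
qed

lemma kuramoto_rhs_lipschitz:
  assumes W: "bounded_kernel M W" and v: "integrable M v" and w: "integrable M w"
  shows "L1_norm M (\<lambda>x. kuramoto_rhs M W v x - kuramoto_rhs M W w x) \<le> 2 * L1_norm M (\<lambda>x. v x - w x)"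
proof -
  have "L1_norm M (\<lambda>x. kuramoto_rhs M W v x - kuramoto_rhs M W w x)
      \<le> (LINT x|M. L1_norm M (\<lambda>y. v y - w y) + \<bar>v x - w x\<bar>)"
    unfolding L1_norm_def[of M "\<lambda>x. kuramoto_rhs M W v x - kuramoto_rhs M W w x"]
    using v w abs_kuramoto_rhs_diff_le[OF W v w] L1_norm_nonneg[of M]
    by (intro integral_mono') (auto intro: add_nonneg_nonneg)
  also have "\<dots> = 2 * L1_norm M (\<lambda>x. v x - w x)"
    using v w by (simp add: L1_norm_def prob_space)
  finally show ?thesis .
qed

lemma kuramoto_rhs_graphon_diff_eq:
  assumes W: "graphon M W" and W': "graphon M W'" and v: "v \<in> borel_measurable M"
    and x: "x \<in> space M"
  shows "kuramoto_rhs M W v x - kuramoto_rhs M W' v x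
           = cos (v x) * (LINT y|M. (W x y - W' x y) * sin (v y))
             - sin (v x) * (LINT y|M. (W x y - W' x y) * cos (v y))"
proof -
  have K: "bounded_kernel M (\<lambda>x y. W x y - W' x y)" by (rule bounded_kernel_graphon_diff[OF W W'])
  have sin: "(\<lambda>y. sin (v y)) \<in> borel_measurable M" and cos: "(\<lambda>y. cos (v y)) \<in> borel_measurable M"
    using v by measurable
  have "kuramoto_rhs M W v x - kuramoto_rhs M W' v x
      = (LINT y|M. W x y * sin (v y - v x) - W' x y * sin (v y - v x))"
    unfolding kuramoto_rhs_def using W W' v x
    by (intro Bochner_Integration.integral_diff[symmetric] kuramoto_rhs_integrable_section
        bounded_kernel_graphon)
  also have "\<dots> = (LINT y|M. cos (v x) * ((W x y - W' x y) * sin (v y))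
                               - sin (v x) * ((W x y - W' x y) * cos (v y)))"
    by (rule Bochner_Integration.integral_cong) (auto simp: sin_diff algebra_simps)
  also have "\<dots> = cos (v x) * (LINT y|M. (W x y - W' x y) * sin (v y))
                   - sin (v x) * (LINT y|M. (W x y - W' x y) * cos (v y))"
    using bounded_kernel_integrable[OF K x sin] bounded_kernel_integrable[OF K x cos] by simp
  finally show ?thesis .
qed

lemma kuramoto_rhs_graphon_diff_le:
  assumes W: "graphon M W" and W': "graphon M W'" and v: "v \<in> borel_measurable M"
  shows "L1_norm M (\<lambda>x. kuramoto_rhs M W v x - kuramoto_rhs M W' v x)
           \<le> 2 * inf_to_one_norm M (\<lambda>x y. W x y - W' x y)"
proof -
  have K: "bounded_kernel M (\<lambda>x y. W x y - W' x y)" by (rule bounded_kernel_graphon_diff[OF W W'])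
  have sin: "(\<lambda>y. sin (v y)) \<in> borel_measurable M" and cos: "(\<lambda>y. cos (v y)) \<in> borel_measurable M"
    using v by measurable
  define A where "A x = (LINT y|M. (W x y - W' x y) * sin (v y))" for x
  define B where "B x = (LINT y|M. (W x y - W' x y) * cos (v y))" for x
  have "L1_norm M (\<lambda>x. kuramoto_rhs M W v x - kuramoto_rhs M W' v x) \<le> L1_norm M A + L1_norm M B"
  proof (rule L1_norm_le_add)
    show "integrable M A" "integrable M B"
      unfolding A_def[abs_def] B_def[abs_def] using sin cos
      by (auto intro!: integrable_kernel_integral[OF K])
    fix x assume x: "x \<in> space M"
    have "\<bar>cos (v x) * A x - sin (v x) * B x\<bar> \<le> \<bar>cos (v x)\<bar> * \<bar>A x\<bar> + \<bar>sin (v x)\<bar> * \<bar>B x\<bar>"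
      by (metis abs_mult abs_triangle_ineq4)
    also have "\<dots> \<le> 1 * \<bar>A x\<bar> + 1 * \<bar>B x\<bar>"
      by (intro add_mono mult_right_mono) auto
    finally show "\<bar>kuramoto_rhs M W v x - kuramoto_rhs M W' v x\<bar> \<le> \<bar>A x\<bar> + \<bar>B x\<bar>"
      unfolding kuramoto_rhs_graphon_diff_eq[OF W W' v x] A_def B_def by simp
  qed
  also have "L1_norm M A \<le> inf_to_one_norm M (\<lambda>x y. W x y - W' x y)"
    unfolding L1_norm_def A_def using inf_to_one_norm_ge[OF K sin] by simp
  also have "L1_norm M B \<le> inf_to_one_norm M (\<lambda>x y. W x y - W' x y)"
    unfolding L1_norm_def B_def using inf_to_one_norm_ge[OF K cos] by simp
  finally show ?thesis by simp
qed

end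

lemma kuramoto_rhs_compose_automorphism:
  assumes W: "graphon M W" and \<phi>: "graphon_automorphism M W \<phi>" and v: "v \<in> borel_measurable M"
    and x: "x \<in> space M"
  shows "kuramoto_rhs M W (\<lambda>y. v (\<phi> y)) x = kuramoto_rhs M W v (\<phi> x)"
proof -
  have K: "bounded_kernel M W" by (rule bounded_kernel_graphon[OF W])
  have \<phi>_meas: "\<phi> \<in> M \<rightarrow>\<^sub>M M" and distr: "distr M M \<phi> = M"
    and ae: "AE y in M. W (\<phi> x) (\<phi> y) = W x y"
    using \<phi> x unfolding graphon_automorphism_def meas_pres_def by auto
  have \<phi>x: "\<phi> x \<in> space M" by (rule measurable_space[OF \<phi>_meas x])
  have f: "(\<lambda>z. W (\<phi> x) z * sin (v z - v (\<phi> x))) \<in> borel_measurable M"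
    by (intro borel_measurable_times bounded_kernel_section_measurable[OF K \<phi>x]
        borel_measurable_sin_diff_const v)
  have "kuramoto_rhs M W (\<lambda>y. v (\<phi> y)) x = (LINT y|M. W (\<phi> x) (\<phi> y) * sin (v (\<phi> y) - v (\<phi> x)))"
    unfolding kuramoto_rhs_def
  proof (rule integral_cong_AE)
    have "(\<lambda>y. v (\<phi> y)) \<in> borel_measurable M" by (rule measurable_compose[OF \<phi>_meas v])
    then show "(\<lambda>y. W x y * sin (v (\<phi> y) - v (\<phi> x))) \<in> borel_measurable M"
      by (intro borel_measurable_times bounded_kernel_section_measurable[OF K x]
          borel_measurable_sin_diff_const)
    show "(\<lambda>y. W (\<phi> x) (\<phi> y) * sin (v (\<phi> y) - v (\<phi> x))) \<in> borel_measurable M"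
      using measurable_compose[OF \<phi>_meas f] by simp
    show "AE y in M. W x y * sin (v (\<phi> y) - v (\<phi> x)) = W (\<phi> x) (\<phi> y) * sin (v (\<phi> y) - v (\<phi> x))"
      using ae by eventually_elim simp
  qed
  also have "\<dots> = integral\<^sup>L (distr M M \<phi>) (\<lambda>z. W (\<phi> x) z * sin (v z - v (\<phi> x)))"
    by (rule integral_distr[symmetric, OF \<phi>_meas f])
  also have "\<dots> = kuramoto_rhs M W v (\<phi> x)" unfolding distr kuramoto_rhs_def ..
  finally show ?thesis .
qed

section \<open>Trajectories\<close>

lemma kuramoto_trajectory_iff:
  "kuramoto_trajectory M W u \<longleftrightarrow>
     (\<forall>t. integrable M (u t)) \<and> has_L1_derivative M u (\<lambda>t. kuramoto_rhs M W (u t))"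
  unfolding kuramoto_trajectory_def has_L1_derivative_def by simp

context prob_space
begin

lemma kuramoto_trajectory_automorphism_invariant:
  assumes W: "graphon M W" and \<phi>: "graphon_automorphism M W \<phi>"
    and u: "kuramoto_trajectory M W u" and u0: "AE x in M. u 0 (\<phi> x) = u 0 x"
  shows "L1_norm M (\<lambda>x. u t (\<phi> x) - u t x) = 0"
proof -
  have K: "bounded_kernel M W" by (rule bounded_kernel_graphon[OF W])
  have mp: "meas_pres M \<phi>" using \<phi> unfolding graphon_automorphism_def by simp
  have iu: "\<And>t. integrable M (u t)" and du: "has_L1_derivative M u (\<lambda>t. kuramoto_rhs M W (u t))"
    using u unfolding kuramoto_trajectory_iff by auto
  have iR: "\<And>t. integrable M (kuramoto_rhs M W (u t))"
    using iu by (intro integrable_kuramoto_rhs[OF K]) auto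
  have iu\<phi>: "\<And>t. integrable M (\<lambda>x. u t (\<phi> x))" and iR\<phi>: "\<And>t. integrable M (\<lambda>x. kuramoto_rhs M W (u t) (\<phi> x))"
    using integrable_compose_meas_pres[OF mp] iu iR by auto
  let ?p = "\<lambda>t x. u t (\<phi> x) - u t x"
  let ?D = "\<lambda>t x. kuramoto_rhs M W (u t) (\<phi> x) - kuramoto_rhs M W (u t) x"
  have "has_L1_derivative M ?p ?D"
    by (intro has_L1_derivative_diff has_L1_derivative_compose_meas_pres[OF mp] iu iR iu\<phi> iR\<phi> du)
  moreover have "L1_norm M (?D s) \<le> 2 * L1_norm M (?p s) + 0" for s
  proof -
    have "L1_norm M (?D s) = L1_norm M (\<lambda>x. kuramoto_rhs M W (\<lambda>y. u s (\<phi> y)) x - kuramoto_rhs M W (u s) x)"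
      using iu by (intro L1_norm_cong) (simp add: kuramoto_rhs_compose_automorphism[OF W \<phi>])
    also have "\<dots> \<le> 2 * L1_norm M (?p s)" by (rule kuramoto_rhs_lipschitz[OF K iu\<phi> iu])
    finally show ?thesis by simp
  qed
  ultimately have "L1_norm M (?p t) \<le> (L1_norm M (?p 0) + 0 * \<bar>t\<bar>) * exp (2 * \<bar>t\<bar>)"
    by (intro has_L1_derivative_gronwall) (use iu iu\<phi> iR iR\<phi> in auto)
  moreover have "L1_norm M (?p 0) = 0"
    unfolding L1_norm_def using u0 by (intro integral_eq_zero_AE) auto
  ultimately show ?thesis using L1_norm_nonneg[of M "?p t"] by simp
qed

lemma kuramoto_trajectory_graphon_stability:
  assumes W: "graphon M W" and W': "graphon M W'"
    and u: "kuramoto_trajectory M W u" and u': "kuramoto_trajectory M W' u'"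
  shows "L1_norm M (\<lambda>x. u' t x - u t x)
           \<le> (L1_norm M (\<lambda>x. u' 0 x - u 0 x) + 2 * inf_to_one_norm M (\<lambda>x y. W' x y - W x y) * \<bar>t\<bar>)
               * exp (2 * \<bar>t\<bar>)"
proof -
  have K: "bounded_kernel M W" and K': "bounded_kernel M W'" using W W' by (auto intro: bounded_kernel_graphon)
  have iu: "\<And>t. integrable M (u t)" and du: "has_L1_derivative M u (\<lambda>t. kuramoto_rhs M W (u t))"
    using u unfolding kuramoto_trajectory_iff by auto
  have iu': "\<And>t. integrable M (u' t)" and du': "has_L1_derivative M u' (\<lambda>t. kuramoto_rhs M W' (u' t))"
    using u' unfolding kuramoto_trajectory_iff by auto
  have iR: "\<And>t. integrable M (kuramoto_rhs M W (u t))" and iR': "\<And>t. integrable M (kuramoto_rhs M W' (u' t))"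
    using iu iu' by (auto intro: integrable_kuramoto_rhs[OF K] integrable_kuramoto_rhs[OF K'])
  let ?\<epsilon> = "inf_to_one_norm M (\<lambda>x y. W' x y - W x y)"
  let ?p = "\<lambda>t x. u' t x - u t x"
  let ?D = "\<lambda>t x. kuramoto_rhs M W' (u' t) x - kuramoto_rhs M W (u t) x"
  have "has_L1_derivative M ?p ?D"
    by (rule has_L1_derivative_diff[OF iu' iu iR' iR du' du])
  moreover have "L1_norm M (?D s) \<le> 2 * L1_norm M (?p s) + 2 * ?\<epsilon>" for s
  proof -
    have "L1_norm M (?D s) \<le> L1_norm M (\<lambda>x. kuramoto_rhs M W' (u' s) x - kuramoto_rhs M W' (u s) x)
        + L1_norm M (\<lambda>x. kuramoto_rhs M W' (u s) x - kuramoto_rhs M W (u s) x)"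
      using iu by (intro L1_norm_triangle iR iR' integrable_kuramoto_rhs[OF K']) auto
    also have "\<dots> \<le> 2 * L1_norm M (?p s) + 2 * ?\<epsilon>"
      using iu by (intro add_mono kuramoto_rhs_lipschitz[OF K' iu' iu] kuramoto_rhs_graphon_diff_le[OF W' W])
        auto
    finally show ?thesis .
  qed
  moreover have "0 \<le> ?\<epsilon>" by (intro inf_to_one_norm_nonneg bounded_kernel_graphon_diff[OF W' W])
  ultimately show ?thesis
    by (intro has_L1_derivative_gronwall) (use iu iu' iR iR' in auto)
qed

lemma kuramoto_trajectory_asymmetry_le:
  assumes W: "graphon M W" and \<phi>: "graphon_automorphism M W \<phi>"
    and u: "kuramoto_trajectory M W u" and u0: "AE x in M. u 0 (\<phi> x) = u 0 x"
    and W': "graphon M W'" and u': "kuramoto_trajectory M W' u'"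
  shows "L1_norm M (\<lambda>x. u' t (\<phi> x) - u' t x)
           \<le> 2 * ((L1_norm M (\<lambda>x. u' 0 x - u 0 x) + 2 * inf_to_one_norm M (\<lambda>x y. W' x y - W x y) * \<bar>t\<bar>)
                   * exp (2 * \<bar>t\<bar>))"
proof -
  have "L1_norm M (\<lambda>x. u' t (\<phi> x) - u' t x)
      \<le> 2 * L1_norm M (\<lambda>x. u' t x - u t x) + L1_norm M (\<lambda>x. u t (\<phi> x) - u t x)"
    using \<phi> u u' unfolding graphon_automorphism_def kuramoto_trajectory_iff
    by (intro L1_norm_compose_diff_le) auto
  then show ?thesis
    using kuramoto_trajectory_automorphism_invariant[OF W \<phi> u u0, of t]
      kuramoto_trajectory_graphon_stability[OF W W' u u', of t]
    by simp
qed

end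

lemma uniform_limit_null_bound:
  fixes f :: "'b \<Rightarrow> 'c \<Rightarrow> real"
  assumes bound: "\<And>n x. x \<in> S \<Longrightarrow> \<bar>f n x\<bar> \<le> b n" and b: "(b \<longlongrightarrow> 0) F"
  shows "uniform_limit S f (\<lambda>_. 0) F"
proof (rule uniform_limitI)
  fix e :: real assume "0 < e"
  with b have "\<forall>\<^sub>F n in F. b n < e" by (rule order_tendstoD(2))
  then show "\<forall>\<^sub>F n in F. \<forall>x\<in>S. dist (f n x) 0 < e"
    by eventually_elim (auto simp: dist_real_def intro: le_less_trans[OF bound])
qed

theorem corollary6p3:
  fixes M :: "'a measure" and W :: "'a \<Rightarrow> 'a \<Rightarrow> real" and \<phi> :: "'a \<Rightarrow> 'a"
    and u :: "real \<Rightarrow> 'a \<Rightarrow> real"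
    and Wn :: "nat \<Rightarrow> 'a \<Rightarrow> 'a \<Rightarrow> real" and un :: "nat \<Rightarrow> real \<Rightarrow> 'a \<Rightarrow> real"
  assumes "graphon M W"
    and "graphon_automorphism M W \<phi>"
    and "kuramoto_trajectory M W u"
    and "AE x in M. u 0 (\<phi> x) = u 0 x"
    and "\<And>n. graphon M (Wn n)"
    and "\<And>n. kuramoto_trajectory M (Wn n) (un n)"
    and "(\<lambda>n. inf_to_one_norm M (\<lambda>x y. Wn n x y - W x y)) \<longlonglongrightarrow> 0"
    and "(\<lambda>n. L1_norm M (\<lambda>x. un n 0 x - u 0 x)) \<longlonglongrightarrow> 0"
  shows "(\<forall>t. (\<lambda>n. L1_norm M (\<lambda>x. un n t (\<phi> x) - un n t x)) \<longlonglongrightarrow> 0) \<and>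
         (\<forall>T. uniform_limit {-T..T} (\<lambda>n t. L1_norm M (\<lambda>x. un n t (\<phi> x) - un n t x))
                 (\<lambda>t. 0) sequentially)"
proof -
  interpret prob_space M using assms(1) by (simp add: graphon_def)
  define B where "B n T = 2 * ((L1_norm M (\<lambda>x. un n 0 x - u 0 x)
    + 2 * inf_to_one_norm M (\<lambda>x y. Wn n x y - W x y) * T) * exp (2 * T))" for n T
  have bound: "\<bar>L1_norm M (\<lambda>x. un n t (\<phi> x) - un n t x)\<bar> \<le> B n T" if "\<bar>t\<bar> \<le> T" for n t T
  proof -
    have "B n \<bar>t\<bar> \<le> B n T"
      unfolding B_def using that L1_norm_nonneg[of M] abs_ge_zero[of t]
        inf_to_one_norm_nonneg[OF bounded_kernel_graphon_diff[OF assms(5,1)]]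
      by (intro mult_left_mono mult_mono add_left_mono) (auto intro!: add_nonneg_nonneg)
    then show ?thesis
      using kuramoto_trajectory_asymmetry_le[OF assms(1-5,6), of n t] L1_norm_nonneg[of M]
      unfolding B_def by simp
  qed
  have "(\<lambda>n. B n T) \<longlonglongrightarrow> 2 * ((0 + 2 * 0 * T) * exp (2 * T))" for T
    unfolding B_def by (intro tendsto_intros assms(7,8))
  then have unif: "uniform_limit {-T..T} (\<lambda>n t. L1_norm M (\<lambda>x. un n t (\<phi> x) - un n t x)) (\<lambda>t. 0)
      sequentially" for T
    using bound by (intro uniform_limit_null_bound[where b = "\<lambda>n. B n T"]) auto
  have "(\<lambda>n. L1_norm M (\<lambda>x. un n t (\<phi> x) - un n t x)) \<longlonglongrightarrow> 0" for t
    by (rule tendsto_uniform_limitI[OF unif[of "\<bar>t\<bar>"]]) auto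
  with unif show ?thesis by blast
qed

end
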